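(* The generating series $F(q;x)=\sum_\gamma q^{\omega_{HU}(\gamma)+\omega_{DH}(\gamma)+\omega_{DU}(\gamma)+\omega_{HH}(\gamma)}x^{|\gamma|}$, where $\gamma$ ranges over all Grand Motzkin paths and $|\gamma|$ is the length, is $$F(q;x)=\frac{1+(1-q)x}{\sqrt{(1+x)\big(1-(1+2q)x-(1-q^2)x^2+(1-q)^2x^3\big)}}.$$
   Context: Steps: $U=(1,1)$, $D=(1,-1)$, $H=(1,0)$. A Grand Motzkin path of length $n$ is any lattice path from $(0,0)$ to $(n,0)$ with steps $U,D,H$. Paths are identified with words of steps, and $\omega_\alpha(\gamma)$ is the number of occurrences of the word $\alpha$ as a factor (contiguous subword, overlapping occurrences counted separately) of $\gamma$. *)

theory Defs
  imports Complex_Main "HOL-Computational_Algebra.Formal_Power_Series"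
begin

datatype step = U | D | H

fun step_height :: "step \<Rightarrow> int" where
  "step_height U = 1" | "step_height D = -1" | "step_height H = 0"

definition grand_motzkin :: "nat \<Rightarrow> step list set" where
  "grand_motzkin n = {\<gamma>. length \<gamma> = n \<and> sum_list (map step_height \<gamma>) = 0}"

definition occ :: "step list \<Rightarrow> step list \<Rightarrow> nat" where
  "occ a g = card {i. i + length a \<le> length g \<and> take (length a) (drop i g) = a}"

definition stat :: "step list \<Rightarrow> nat" where
  "stat g = occ [H,U] g + occ [D,H] g + occ [D,U] g + occ [H,H] g"

definition F :: "real \<Rightarrow> real fps" where
  "F q = Abs_fps (\<lambda>n. \<Sum>g\<in>grand_motzkin n. q ^ stat g)"

end

theory Submission
  imports Defs
begin

(* The statistic counts the adjacent pairs (a, b) of steps with a <> U and b <> D,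
   so the weight q^stat of a path factors along first-return decompositions:
     Motzkin paths            []  |  H r  |  U m D r    (m, r Motzkin),
     negative Motzkin paths   []  |  H r  |  D m U r    (m, r negative Motzkin),
     Grand Motzkin paths      []  |  H r  |  U m D r  |  D m U r.
   By a product rule for unambiguous concatenations these become equations between the
   generating functions M (Motzkin paths), E (negative Motzkin paths m, weighted inside D m U)
   and F.  Since E (1 + (1 - q) x) and q M satisfy the same quadratic, which has a unique power
   series solution, they are equal; eliminating the remaining auxiliary series then gives
   F * s = 1 + (1 - q) x with s = 1 - q x - (1 - q) x^2 - 2 q x^2 M.  Finally s^2 is the
   radicand of the theorem and s(0) = 1, so s is its formal square root. *)

unbundle fps_syntax

fun adj_pairs :: "('a \<Rightarrow> 'a \<Rightarrow> bool) \<Rightarrow> 'a list \<Rightarrow> nat" where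
  "adj_pairs R (a # b # g) = (if R a b then 1 else 0) + adj_pairs R (b # g)"
| "adj_pairs R _ = 0"

lemma adj_pairs_Cons:
  "adj_pairs R (a # g) = (if g \<noteq> [] \<and> R a (hd g) then 1 else 0) + adj_pairs R g"
  by (cases g) auto

lemma adj_pairs_snoc:
  "adj_pairs R (g @ [b]) = adj_pairs R g + (if g \<noteq> [] \<and> R (last g) b then 1 else 0)"
  by (induction g) (auto simp: adj_pairs_Cons)

lemma adj_pairs_split:
  "adj_pairs R (xs @ a # ys) = adj_pairs R (xs @ [a]) + adj_pairs R (a # ys)"
  by (induction xs) (auto simp: adj_pairs_Cons hd_append)

(* The statistic of the theorem counts exactly the pairs HU, DH, DU, HH,
   i.e. the pairs (a, b) with a <> U and b <> D. *)
definition stat_pair :: "step \<Rightarrow> step \<Rightarrow> bool" where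
  "stat_pair a b \<longleftrightarrow> a \<noteq> U \<and> b \<noteq> D"

lemma occ_pair_Cons:
  "occ [a, b] (s # g) = (if g \<noteq> [] \<and> s = a \<and> hd g = b then 1 else 0) + occ [a, b] g"
proof -
  define A where "A = {i. i + length [a, b] \<le> length g \<and> take (length [a, b]) (drop i g) = [a, b]}"
  have "finite A" unfolding A_def by (rule finite_subset[of _ "{..length g}"]) auto
  have "{i. i + length [a, b] \<le> length (s # g) \<and> take (length [a, b]) (drop i (s # g)) = [a, b]}
      = (if g \<noteq> [] \<and> s = a \<and> hd g = b then {0} else {}) \<union> Suc ` A"
  proof (rule set_eqI)
    fix i
    show "i \<in> {i. i + length [a, b] \<le> length (s # g) \<and> take (length [a, b]) (drop i (s # g)) = [a, b]}
      \<longleftrightarrow> i \<in> (if g \<noteq> [] \<and> s = a \<and> hd g = b then {0} else {}) \<union> Suc ` A"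
      unfolding A_def by (cases i; cases g) (auto simp: image_iff)
  qed
  moreover have "0 \<notin> Suc ` A" by auto
  ultimately show ?thesis using \<open>finite A\<close> by (auto simp: occ_def card_image A_def)
qed

lemma stat_Cons: "stat (s # g) = (if g \<noteq> [] \<and> stat_pair s (hd g) then 1 else 0) + stat g"
  unfolding stat_def occ_pair_Cons by (cases s; cases "hd g") (auto simp: stat_pair_def)

lemma stat_eq_adj_pairs: "stat g = adj_pairs stat_pair g"
proof (induction g)
  case Nil then show ?case by (simp add: stat_def occ_def)
next
  case (Cons s g) then show ?case by (simp add: stat_Cons adj_pairs_Cons)
qed

definition height :: "step list \<Rightarrow> int" where
  "height g = sum_list (map step_height g)"

lemma height_simps [simp]:
  "height [] = 0" "height (s # g) = step_height s + height g" "height (g @ g') = height g + height g'"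
  by (simp_all add: height_def)

fun stays_nonneg :: "int \<Rightarrow> step list \<Rightarrow> bool" where
  "stays_nonneg c [] \<longleftrightarrow> 0 \<le> c"
| "stays_nonneg c (s # g) \<longleftrightarrow> 0 \<le> c \<and> stays_nonneg (c + step_height s) g"

lemma stays_nonneg_start: "stays_nonneg c g \<Longrightarrow> 0 \<le> c"
  by (cases g) auto

lemma stays_nonneg_append:
  "stays_nonneg c (g @ g') \<longleftrightarrow> stays_nonneg c g \<and> stays_nonneg (c + height g) g'"
  by (induction g arbitrary: c) (auto simp: add.assoc dest: stays_nonneg_start)

lemma stays_nonneg_mono: "stays_nonneg c g \<Longrightarrow> c \<le> c' \<Longrightarrow> stays_nonneg c' g"
  by (induction g arbitrary: c c') fastforce+

definition motzkin :: "step list \<Rightarrow> bool" where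
  "motzkin g \<longleftrightarrow> stays_nonneg 0 g \<and> height g = 0"

fun flip :: "step \<Rightarrow> step" where
  "flip U = D" | "flip D = U" | "flip H = H"

lemma flip_flip [simp]: "flip (flip s) = s"
  by (cases s) auto

lemma flip_comp_flip [simp]: "flip \<circ> flip = id"
  by auto

lemma map_flip_flip [simp]: "map flip (map flip g) = g"
  by simp

lemma map_flip_eq_iff: "map flip g = g' \<longleftrightarrow> g = map flip g'"
  by (metis map_flip_flip)

lemma height_map_flip [simp]: "height (map flip g) = - height g"
proof (induction g)
  case (Cons s g) then show ?case by (cases s) auto
qed simp

lemma ex_map_flip: "(\<exists>g. P g) \<longleftrightarrow> (\<exists>g. P (map flip g))"
  by (metis map_flip_flip)

definition neg_motzkin :: "step list \<Rightarrow> bool" where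
  "neg_motzkin g \<longleftrightarrow> motzkin (map flip g)"

definition grand :: "step list \<Rightarrow> bool" where
  "grand g \<longleftrightarrow> height g = 0"

lemma first_passage_below:
  assumes "height g < 0"
  shows "\<exists>m r. g = m @ D # r \<and> motzkin m"
  using assms
proof (induction "length g" arbitrary: g rule: less_induct)
  case less
  show ?case
  proof (cases g)
    case Nil then show ?thesis using less by simp
  next
    case (Cons s g')
    show ?thesis
    proof (cases s)
      case D then show ?thesis using Cons by (intro exI[of _ "[]"] exI[of _ g']) (simp add: motzkin_def)
    next
      case H
      then obtain m r where "g' = m @ D # r" "motzkin m" using less Cons by force
      then show ?thesis using Cons H by (intro exI[of _ "H # m"] exI[of _ r]) (simp add: motzkin_def)
    next
      case U
      then obtain m1 r1 where 1: "g' = m1 @ D # r1" "motzkin m1" using less Cons by force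
      then have "height r1 < 0" "length r1 < length g" using Cons less U by (auto simp: motzkin_def)
      then obtain m2 r2 where 2: "r1 = m2 @ D # r2" "motzkin m2" using less by blast
      have "motzkin (U # m1 @ D # m2)"
        using 1 2 by (auto simp: motzkin_def stays_nonneg_append elim: stays_nonneg_mono)
      then show ?thesis using 1 2 Cons U by (intro exI[of _ "U # m1 @ D # m2"] exI[of _ r2]) auto
    qed
  qed
qed

lemma first_passage_unique:
  assumes "motzkin m" "motzkin m'" "m @ D # r = m' @ D # r'"
  shows "m = m'"
proof -
  have "m = m'" if "stays_nonneg c m" "c + height m = 0" "stays_nonneg c m'" "c + height m' = 0"
    "m @ D # r = m' @ D # r'" for c
    using that
  proof (induction m arbitrary: c m')
    case Nil then show ?case by (cases m') (auto dest: stays_nonneg_start)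
  next
    case (Cons s m)
    then show ?case
      by (cases m') (auto simp: add.assoc dest: stays_nonneg_start Cons.IH[of "c + step_height s"])
  qed
  then show ?thesis using assms by (auto simp: motzkin_def)
qed

lemma first_passage_unique_neg:
  assumes "neg_motzkin m" "neg_motzkin m'" "m @ U # r = m' @ U # r'"
  shows "m = m'"
proof -
  have "map flip m @ D # map flip r = map flip m' @ D # map flip r'"
    using arg_cong[OF assms(3), of "map flip"] by simp
  then have "map flip m = map flip m'"
    using assms(1,2) first_passage_unique unfolding neg_motzkin_def by blast
  then show ?thesis by (metis map_flip_flip)
qed

lemma motzkin_cases:
  "motzkin g \<longleftrightarrow> g = [] \<or> (\<exists>r. motzkin r \<and> g = H # r)
     \<or> (\<exists>m r. motzkin m \<and> motzkin r \<and> g = U # m @ D # r)"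
proof
  assume M: "motzkin g"
  show "g = [] \<or> (\<exists>r. motzkin r \<and> g = H # r) \<or> (\<exists>m r. motzkin m \<and> motzkin r \<and> g = U # m @ D # r)"
  proof (cases g)
    case (Cons s g')
    show ?thesis
    proof (cases s)
      case U
      with M Cons have "height g' < 0" by (simp add: motzkin_def)
      then obtain m r where "g' = m @ D # r" "motzkin m" using first_passage_below by blast
      with M Cons U show ?thesis by (auto simp: motzkin_def stays_nonneg_append)
    qed (use M Cons in \<open>auto simp: motzkin_def dest: stays_nonneg_start\<close>)
  qed simp
next
  assume "g = [] \<or> (\<exists>r. motzkin r \<and> g = H # r) \<or> (\<exists>m r. motzkin m \<and> motzkin r \<and> g = U # m @ D # r)"
  then show "motzkin g"
    using stays_nonneg_mono[of 0 _ 1] by (auto simp: motzkin_def stays_nonneg_append)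
qed

lemma neg_motzkin_cases:
  "neg_motzkin g \<longleftrightarrow> g = [] \<or> (\<exists>r. neg_motzkin r \<and> g = H # r)
     \<or> (\<exists>m r. neg_motzkin m \<and> neg_motzkin r \<and> g = D # m @ U # r)"
proof -
  have "(\<exists>r. motzkin r \<and> map flip g = H # r) \<longleftrightarrow> (\<exists>r. neg_motzkin r \<and> g = H # r)"
    by (subst ex_map_flip) (auto simp: neg_motzkin_def map_flip_eq_iff)
  moreover have "(\<exists>m r. motzkin m \<and> motzkin r \<and> map flip g = U # m @ D # r)
      \<longleftrightarrow> (\<exists>m r. neg_motzkin m \<and> neg_motzkin r \<and> g = D # m @ U # r)"
    by (subst ex_map_flip, subst (2) ex_map_flip) (auto simp: neg_motzkin_def map_flip_eq_iff)
  ultimately show ?thesis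
    unfolding neg_motzkin_def[of g] motzkin_cases[of "map flip g"] by simp
qed

lemma grand_cases:
  "grand g \<longleftrightarrow> g = [] \<or> (\<exists>r. grand r \<and> g = H # r)
     \<or> (\<exists>m r. motzkin m \<and> grand r \<and> g = U # m @ D # r)
     \<or> (\<exists>m r. neg_motzkin m \<and> grand r \<and> g = D # m @ U # r)"
proof
  assume G: "grand g"
  show "g = [] \<or> (\<exists>r. grand r \<and> g = H # r) \<or> (\<exists>m r. motzkin m \<and> grand r \<and> g = U # m @ D # r)
     \<or> (\<exists>m r. neg_motzkin m \<and> grand r \<and> g = D # m @ U # r)"
  proof (cases g)
    case (Cons s g')
    show ?thesis
    proof (cases s)
      case U
      with G Cons have "height g' < 0" by (simp add: grand_def)
      then obtain m r where "g' = m @ D # r" "motzkin m" using first_passage_below by blast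
      with G Cons U show ?thesis by (auto simp: grand_def motzkin_def)
    next
      case D
      with G Cons have "height (map flip g') < 0" by (simp add: grand_def)
      then obtain m r where mr: "map flip g' = m @ D # r" "motzkin m" using first_passage_below by blast
      then have "g' = map flip m @ U # map flip r" by (simp add: map_flip_eq_iff)
      moreover have "neg_motzkin (map flip m)" "grand (map flip r)"
        using G Cons D mr \<open>g' = _\<close> by (auto simp: grand_def motzkin_def neg_motzkin_def)
      ultimately show ?thesis using Cons D by blast
    next
      case H with G Cons show ?thesis by (auto simp: grand_def)
    qed
  qed simp
next
  assume "g = [] \<or> (\<exists>r. grand r \<and> g = H # r) \<or> (\<exists>m r. motzkin m \<and> grand r \<and> g = U # m @ D # r)
     \<or> (\<exists>m r. neg_motzkin m \<and> grand r \<and> g = D # m @ U # r)"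
  then show "grand g" by (auto simp: grand_def motzkin_def neg_motzkin_def)
qed

definition gf :: "(step list \<Rightarrow> bool) \<Rightarrow> (step list \<Rightarrow> 'a::comm_ring_1) \<Rightarrow> 'a fps" where
  "gf P f = Abs_fps (\<lambda>n. \<Sum>g | length g = n \<and> P g. f g)"

lemma gf_nth: "gf P f $ n = (\<Sum>g | length g = n \<and> P g. f g)"
  by (simp add: gf_def)

lemma finite_words_length: "finite {g :: step list. length g = n \<and> P g}"
proof -
  have "finite (UNIV :: step set)"
    by (rule finite_subset[of _ "{U, D, H}"]) (use step.exhaust in auto)
  then have "finite {g :: step list. set g \<subseteq> UNIV \<and> length g = n}"
    by (intro finite_lists_length_eq)
  then show ?thesis by (rule finite_subset[rotated]) auto
qed

lemma gf_cong:
  "(\<And>g. P g \<longleftrightarrow> P' g) \<Longrightarrow> (\<And>g. P g \<Longrightarrow> f g = f' g) \<Longrightarrow> gf P f = gf P' f'"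
  unfolding gf_def by (intro arg_cong[where f = Abs_fps] ext sum.cong) auto

lemma gf_cmult: "gf P (\<lambda>g. c * f g) = fps_const c * gf P f"
  by (rule fps_ext) (simp add: gf_nth sum_distrib_left)

lemma gf_disj:
  assumes "\<And>g. \<not> (P g \<and> Q g)"
  shows "gf (\<lambda>g. P g \<or> Q g) f = gf P f + gf Q f"
proof (rule fps_ext)
  fix n
  have "{g. length g = n \<and> (P g \<or> Q g)} = {g. length g = n \<and> P g} \<union> {g. length g = n \<and> Q g}"
    by auto
  then show "gf (\<lambda>g. P g \<or> Q g) f $ n = (gf P f + gf Q f) $ n"
    using assms by (simp add: gf_nth sum.union_disjoint[OF finite_words_length finite_words_length] disjoint_iff)
qed

lemma gf_Nil: "gf (\<lambda>g. g = []) f = fps_const (f [])"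
proof (rule fps_ext)
  fix n
  show "gf (\<lambda>g. g = []) f $ n = fps_const (f []) $ n"
    by (cases n) (auto simp: gf_nth intro!: sum.neutral)
qed

lemma gf_False: "gf (\<lambda>_. False) f = 0"
  by (rule fps_ext) (simp add: gf_nth)

lemma gf_cases:
  assumes "\<And>g. P g \<longleftrightarrow> g = [] \<or> CH g \<or> CU g \<or> CD g"
    and "\<And>g. CH g \<Longrightarrow> g \<noteq> [] \<and> hd g = H" "\<And>g. CU g \<Longrightarrow> g \<noteq> [] \<and> hd g = U"
    and "\<And>g. CD g \<Longrightarrow> g \<noteq> [] \<and> hd g = D"
  shows "gf P f = fps_const (f []) + gf CH f + gf CU f + gf CD f"
proof -
  have "gf P f = gf (\<lambda>g. g = [] \<or> CH g \<or> CU g \<or> CD g) f"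
    using assms(1) by (rule gf_cong) simp
  also have "\<dots> = gf (\<lambda>g. g = []) f + gf (\<lambda>g. CH g \<or> CU g \<or> CD g) f"
    using assms(2-4) by (intro gf_disj) blast
  also have "gf (\<lambda>g. CH g \<or> CU g \<or> CD g) f = gf CH f + gf (\<lambda>g. CU g \<or> CD g) f"
    using assms(2-4) by (intro gf_disj) (metis step.distinct)
  also have "gf (\<lambda>g. CU g \<or> CD g) f = gf CU f + gf CD f"
    using assms(2-4) by (intro gf_disj) (metis step.distinct)
  finally show ?thesis by (simp add: gf_Nil add.assoc)
qed

lemma gf_mult_nth:
  "(gf PA fa * gf PB fb) $ t
     = (\<Sum>(m, r) \<in> {(m, r). PA m \<and> PB r \<and> length m + length r = t}. fa m * fb r)"
proof -
  define A where "A i = {m. length m = i \<and> PA m}" for i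
  define B where "B i = {r. length r = i \<and> PB r}" for i
  have fin: "finite (A i)" "finite (B i)" for i
    unfolding A_def B_def by (rule finite_words_length)+
  have pairs: "{(m, r). PA m \<and> PB r \<and> length m + length r = t} = (\<Union>i\<in>{0..t}. A i \<times> B (t - i))"
    by (auto simp: A_def B_def)
  have "(gf PA fa * gf PB fb) $ t = (\<Sum>i=0..t. (\<Sum>m\<in>A i. fa m) * (\<Sum>r\<in>B (t - i). fb r))"
    by (simp add: fps_mult_nth gf_nth A_def B_def)
  also have "\<dots> = (\<Sum>i=0..t. \<Sum>(m, r)\<in>A i \<times> B (t - i). fa m * fb r)"
    by (simp add: sum_product sum.cartesian_product)
  also have "\<dots> = (\<Sum>(m, r) \<in> (\<Union>i\<in>{0..t}. A i \<times> B (t - i)). fa m * fb r)"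
    by (rule sum.UNION_disjoint[symmetric]) (simp_all add: fin, auto simp: A_def)
  finally show ?thesis unfolding pairs .
qed

lemma concat_bij:
  assumes unique: "\<And>m r m' r'. PA m \<Longrightarrow> PB r \<Longrightarrow> PA m' \<Longrightarrow> PB r' \<Longrightarrow>
        pre @ m @ mid @ r = pre @ m' @ mid @ r' \<Longrightarrow> m = m'"
  shows "bij_betw (\<lambda>(m, r). pre @ m @ mid @ r) {(m, r). PA m \<and> PB r \<and> length m + length r = t}
           {g. length g = length pre + length mid + t \<and> (\<exists>m r. PA m \<and> PB r \<and> g = pre @ m @ mid @ r)}"
proof (rule bij_betwI')
  fix p p' assume "p \<in> {(m, r). PA m \<and> PB r \<and> length m + length r = t}"
    "p' \<in> {(m, r). PA m \<and> PB r \<and> length m + length r = t}"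
  then show "((\<lambda>(m, r). pre @ m @ mid @ r) p = (\<lambda>(m, r). pre @ m @ mid @ r) p') \<longleftrightarrow> p = p'"
    using unique by auto
next
  fix g assume "g \<in> {g. length g = length pre + length mid + t \<and> (\<exists>m r. PA m \<and> PB r \<and> g = pre @ m @ mid @ r)}"
  then obtain m r where "PA m" "PB r" "g = pre @ m @ mid @ r" "length m + length r = t"
    by auto
  then show "\<exists>p\<in>{(m, r). PA m \<and> PB r \<and> length m + length r = t}. g = (\<lambda>(m, r). pre @ m @ mid @ r) p"
    by (intro bexI[of _ "(m, r)"]) auto
qed auto

lemma gf_concat:
  assumes unique: "\<And>m r m' r'. PA m \<Longrightarrow> PB r \<Longrightarrow> PA m' \<Longrightarrow> PB r' \<Longrightarrow>
        pre @ m @ mid @ r = pre @ m' @ mid @ r' \<Longrightarrow> m = m'"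
    and mult: "\<And>m r. PA m \<Longrightarrow> PB r \<Longrightarrow> f (pre @ m @ mid @ r) = fa m * fb r"
  shows "gf (\<lambda>g. \<exists>m r. PA m \<and> PB r \<and> g = pre @ m @ mid @ r) f
       = fps_X ^ (length pre + length mid) * (gf PA fa * gf PB fb)"
proof (rule fps_ext)
  fix n
  define k where "k = length pre + length mid"
  define Words where "Words = {g. length g = n \<and> (\<exists>m r. PA m \<and> PB r \<and> g = pre @ m @ mid @ r)}"
  have coeff: "gf (\<lambda>g. \<exists>m r. PA m \<and> PB r \<and> g = pre @ m @ mid @ r) f $ n = (\<Sum>g\<in>Words. f g)"
    unfolding gf_nth Words_def ..
  show "gf (\<lambda>g. \<exists>m r. PA m \<and> PB r \<and> g = pre @ m @ mid @ r) f $ n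
       = (fps_X ^ (length pre + length mid) * (gf PA fa * gf PB fb)) $ n"
  proof (cases "n < k")
    case True
    then have "Words = {}" by (auto simp: Words_def k_def)
    then show ?thesis using True unfolding coeff by (simp add: fps_X_power_mult_nth k_def)
  next
    case False
    then have "bij_betw (\<lambda>(m, r). pre @ m @ mid @ r) {(m, r). PA m \<and> PB r \<and> length m + length r = n - k} Words"
      using concat_bij[where PA = PA and PB = PB and pre = pre and mid = mid and t = "n - k", OF unique]
      by (simp add: Words_def k_def)
    then have "(\<Sum>g\<in>Words. f g) = (\<Sum>(m, r) \<in> {(m, r). PA m \<and> PB r \<and> length m + length r = n - k}. fa m * fb r)"
      by (subst sum.reindex_bij_betw[symmetric]) (auto simp: mult intro!: sum.cong)
    then show ?thesis using False unfolding coeff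
      by (simp add: fps_X_power_mult_nth gf_mult_nth k_def)
  qed
qed

lemma gf_Cons:
  assumes "\<And>r. P r \<Longrightarrow> f (s # r) = f' r"
  shows "gf (\<lambda>g. \<exists>r. P r \<and> g = s # r) f = fps_X * gf P f'"
proof -
  have "gf (\<lambda>g. \<exists>m r. m = [] \<and> P r \<and> g = [s] @ m @ [] @ r) f
      = fps_X ^ (length [s] + length ([] :: step list)) * (gf (\<lambda>m. m = []) (\<lambda>_. 1) * gf P f')"
    by (rule gf_concat) (auto simp: assms)
  moreover have "gf (\<lambda>g. \<exists>m r. m = [] \<and> P r \<and> g = [s] @ m @ [] @ r) f = gf (\<lambda>g. \<exists>r. P r \<and> g = s # r) f"
    by (rule gf_cong) auto
  ultimately show ?thesis by (simp add: gf_Nil)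
qed

(* The weight q^stat of a word.  The auxiliary series below weight a word inside a context
   of neighbouring letters, e.g. weight q (D # m @ [U]). *)
definition weight :: "'a::comm_ring_1 \<Rightarrow> step list \<Rightarrow> 'a" where
  "weight q g = q ^ adj_pairs stat_pair g"

lemma weight_split: "weight q (xs @ a # ys) = weight q (xs @ [a]) * weight q (a # ys)"
  unfolding weight_def by (subst adj_pairs_split) (rule power_add)

lemma weight_Cons_Cons: "weight q (a # b # g) = (if stat_pair a b then q else 1) * weight q (b # g)"
  by (simp add: weight_def)

(* U is never the first letter of a counted pair, D never the second;
   D and H behave alike as first letters. *)
lemma weight_U_Cons: "weight q (U # g) = weight q g"
  by (simp add: weight_def adj_pairs_Cons stat_pair_def)

lemma weight_snoc_D: "weight q (g @ [D]) = weight q g"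
  by (simp add: weight_def adj_pairs_snoc stat_pair_def)

lemma weight_D_Cons: "weight q (D # g) = weight q (H # g)"
  by (simp add: weight_def adj_pairs_Cons stat_pair_def)

lemma weight_U_factor: "weight q (U # m @ D # r) = weight q m * weight q (H # r)"
  using weight_split[of q "U # m" D r] by (simp add: weight_U_Cons weight_snoc_D weight_D_Cons)

lemma weight_D_factor: "weight q (D # m @ U # r) = weight q (D # m @ [U]) * weight q r"
  using weight_split[of q "D # m" U r] by (simp add: weight_U_Cons)

lemma gf_prepend:
  assumes "\<And>g. C g \<Longrightarrow> g \<noteq> [] \<and> hd g = b"
  shows "gf C (\<lambda>g. weight q (a # g @ t)) = fps_const (if stat_pair a b then q else 1) * gf C (\<lambda>g. weight q (g @ t))"
  unfolding gf_cmult[symmetric]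
proof (rule gf_cong)
  fix g assume "C g"
  from assms[OF \<open>C g\<close>] obtain g' where "g = b # g'" by (cases g) auto
  then show "weight q (a # g @ t) = (if stat_pair a b then q else 1) * weight q (g @ t)"
    by (simp add: weight_Cons_Cons)
qed simp

definition Mgf :: "'a::comm_ring_1 \<Rightarrow> 'a fps" where
  "Mgf q = gf motzkin (weight q)"

lemma Mgf_equation: "Mgf q = 1 + (fps_X + fps_X\<^sup>2 * Mgf q) * (1 + fps_const q * (Mgf q - 1))"
proof -
  define CH where "CH = (\<lambda>g. \<exists>r. motzkin r \<and> g = H # r)"
  define CU where "CU = (\<lambda>g. \<exists>m r. motzkin m \<and> motzkin r \<and> g = [U] @ m @ [D] @ r)"
  define MH where "MH = gf motzkin (\<lambda>g. weight q (H # g))"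
  have heads: "\<And>g. CH g \<Longrightarrow> g \<noteq> [] \<and> hd g = H" "\<And>g. CU g \<Longrightarrow> g \<noteq> [] \<and> hd g = U"
    by (auto simp: CH_def CU_def)
  have "motzkin g \<longleftrightarrow> g = [] \<or> CH g \<or> CU g \<or> False" for g
    unfolding CH_def CU_def using motzkin_cases[of g] by simp
  then have decomp: "gf motzkin f = fps_const (f []) + gf CH f + gf CU f" for f
    using gf_cases[of motzkin CH CU "\<lambda>_. False" f] heads by (simp add: gf_False)
  have CH: "gf CH (weight q) = fps_X * MH"
    unfolding CH_def MH_def by (rule gf_Cons) simp
  have CU: "gf CU (weight q) = fps_X\<^sup>2 * (Mgf q * MH)"
    using gf_concat[of motzkin motzkin "[U]" "[D]" "weight q" "weight q" "\<lambda>r. weight q (H # r)"]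
      first_passage_unique
    by (simp add: CU_def MH_def Mgf_def weight_U_factor numeral_2_eq_2)
  have M: "Mgf q = 1 + gf CH (weight q) + gf CU (weight q)"
    using decomp[of "weight q"] by (simp add: Mgf_def weight_def)
  have "MH = 1 + fps_const q * (gf CH (weight q) + gf CU (weight q))"
    using decomp[of "\<lambda>g. weight q (H # g)"] gf_prepend[OF heads(1), where q=q and a=H and t="[]"]
      gf_prepend[OF heads(2), where q=q and a=H and t="[]"]
    by (simp add: MH_def stat_pair_def distrib_left weight_def[of q "[H]"])
  then have "MH = 1 + fps_const q * (Mgf q - 1)"
    using M by simp
  then show ?thesis
    using M unfolding CH CU by (simp add: distrib_right mult.assoc add.assoc)
qed

(* Generating function of negative Motzkin paths m weighted in the context D m U,
   as they occur in Grand Motzkin paths. *)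
definition Egf :: "'a::comm_ring_1 \<Rightarrow> 'a fps" where
  "Egf q = gf neg_motzkin (\<lambda>m. weight q (D # m @ [U]))"

lemma Egf_equations:
  fixes q :: "'a::comm_ring_1"
  defines "V \<equiv> gf neg_motzkin (\<lambda>m. weight q (m @ [U]))"
  shows "V = 1 + fps_X * Egf q + fps_X\<^sup>2 * (Egf q * V)"
    and "Egf q = fps_const q + fps_const q * fps_X * Egf q + fps_X\<^sup>2 * (Egf q * V)"
proof -
  define CH where "CH = (\<lambda>g. \<exists>r. neg_motzkin r \<and> g = H # r)"
  define CD where "CD = (\<lambda>g. \<exists>m r. neg_motzkin m \<and> neg_motzkin r \<and> g = [D] @ m @ [U] @ r)"
  have heads: "\<And>g. CH g \<Longrightarrow> g \<noteq> [] \<and> hd g = H" "\<And>g. CD g \<Longrightarrow> g \<noteq> [] \<and> hd g = D"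
    by (auto simp: CH_def CD_def)
  have "neg_motzkin g \<longleftrightarrow> g = [] \<or> CH g \<or> False \<or> CD g" for g
    unfolding CH_def CD_def using neg_motzkin_cases[of g] by simp
  then have decomp: "gf neg_motzkin f = fps_const (f []) + gf CH f + gf CD f" for f
    using gf_cases[of neg_motzkin CH "\<lambda>_. False" CD f] heads by (simp add: gf_False)
  have CH: "gf CH (\<lambda>g. weight q (g @ [U])) = fps_X * Egf q"
    unfolding CH_def Egf_def by (rule gf_Cons) (simp add: weight_D_Cons)
  have CD: "gf CD (\<lambda>g. weight q (g @ [U])) = fps_X\<^sup>2 * (Egf q * V)"
    using gf_concat[of neg_motzkin neg_motzkin "[D]" "[U]" "\<lambda>g. weight q (g @ [U])"
        "\<lambda>m. weight q (D # m @ [U])" "\<lambda>r. weight q (r @ [U])"]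
      first_passage_unique_neg
    by (simp add: CD_def V_def Egf_def weight_D_factor[of q _ "_ @ [U]"] numeral_2_eq_2)
  show "V = 1 + fps_X * Egf q + fps_X\<^sup>2 * (Egf q * V)"
    using decomp[of "\<lambda>g. weight q (g @ [U])"] unfolding CH CD
    by (simp add: V_def weight_def[of q "[U]"])
  have "Egf q = fps_const q + fps_const q * gf CH (\<lambda>g. weight q (g @ [U])) + gf CD (\<lambda>g. weight q (g @ [U]))"
    using decomp[of "\<lambda>g. weight q (D # g @ [U])"] gf_prepend[OF heads(1), where q=q and a=D and t="[U]"]
      gf_prepend[OF heads(2), where q=q and a=D and t="[U]"]
    by (simp add: Egf_def stat_pair_def weight_def[of q "[D, U]"])
  then show "Egf q = fps_const q + fps_const q * fps_X * Egf q + fps_X\<^sup>2 * (Egf q * V)"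
    unfolding CH CD by (simp add: mult.assoc)
qed

lemma F_eq_gf: "F q = gf grand (weight q)"
  unfolding F_def gf_def grand_motzkin_def grand_def height_def weight_def stat_eq_adj_pairs ..

lemma F_equations:
  fixes q :: real
  defines "FH \<equiv> gf grand (\<lambda>g. weight q (H # g))"
  shows "F q = 1 + (fps_X + fps_X\<^sup>2 * Mgf q) * FH + fps_X\<^sup>2 * Egf q * F q"
    and "FH = 1 + fps_const q * (fps_X + fps_X\<^sup>2 * Mgf q) * FH + fps_X\<^sup>2 * Egf q * F q"
proof -
  define CH where "CH = (\<lambda>g. \<exists>r. grand r \<and> g = H # r)"
  define CU where "CU = (\<lambda>g. \<exists>m r. motzkin m \<and> grand r \<and> g = [U] @ m @ [D] @ r)"
  define CD where "CD = (\<lambda>g. \<exists>m r. neg_motzkin m \<and> grand r \<and> g = [D] @ m @ [U] @ r)"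
  have heads: "\<And>g. CH g \<Longrightarrow> g \<noteq> [] \<and> hd g = H" "\<And>g. CU g \<Longrightarrow> g \<noteq> [] \<and> hd g = U"
    "\<And>g. CD g \<Longrightarrow> g \<noteq> [] \<and> hd g = D"
    by (auto simp: CH_def CU_def CD_def)
  have "grand g \<longleftrightarrow> g = [] \<or> CH g \<or> CU g \<or> CD g" for g
    unfolding CH_def CU_def CD_def using grand_cases[of g] by simp
  note decomp = gf_cases[OF this heads]
  have CH: "gf CH (weight q) = fps_X * FH"
    unfolding CH_def FH_def by (rule gf_Cons) simp
  have CU: "gf CU (weight q) = fps_X\<^sup>2 * (Mgf q * FH)"
    using gf_concat[of motzkin grand "[U]" "[D]" "weight q" "weight q" "\<lambda>r. weight q (H # r)"]
      first_passage_unique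
    by (simp add: CU_def FH_def Mgf_def weight_U_factor numeral_2_eq_2)
  have "gf CD (weight q) = fps_X ^ (length [D] + length [U]) * (Egf q * F q)"
    unfolding CD_def Egf_def F_eq_gf
  proof (rule gf_concat)
    show "m = m'" if "neg_motzkin m" "neg_motzkin m'" "[D] @ m @ [U] @ r = [D] @ m' @ [U] @ r'"
      for m m' r r' :: "step list"
      using that first_passage_unique_neg by simp
    show "weight q ([D] @ m @ [U] @ r) = weight q (D # m @ [U]) * weight q r" for m r
      using weight_D_factor[of q m r] by simp
  qed
  then have CD: "gf CD (weight q) = fps_X\<^sup>2 * (Egf q * F q)"
    by (simp add: numeral_2_eq_2)
  have F: "F q = 1 + gf CH (weight q) + gf CU (weight q) + gf CD (weight q)"
    using decomp[of "weight q"] by (simp add: F_eq_gf weight_def[of q "[]"])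
  then show "F q = 1 + (fps_X + fps_X\<^sup>2 * Mgf q) * FH + fps_X\<^sup>2 * Egf q * F q"
    unfolding CH CU CD by (simp add: distrib_right mult.assoc add.assoc)
  have "FH = 1 + fps_const q * gf CH (weight q) + fps_const q * gf CU (weight q) + gf CD (weight q)"
    using decomp[of "\<lambda>g. weight q (H # g)"] gf_prepend[OF heads(1), where q=q and a=H and t="[]"]
      gf_prepend[OF heads(2), where q=q and a=H and t="[]"] gf_prepend[OF heads(3), where q=q and a=H and t="[]"]
    by (simp add: FH_def stat_pair_def weight_def[of q "[H]"])
  then show "FH = 1 + fps_const q * (fps_X + fps_X\<^sup>2 * Mgf q) * FH + fps_X\<^sup>2 * Egf q * F q"
    unfolding CH CU CD by (simp add: algebra_simps)
qed

lemma fps_const_one_minus: "fps_const (1 - a) = 1 - fps_const (a :: 'a::ring_1)"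
  by (metis fps_const_1_eq_1 fps_const_sub)

(* A power series that equals x T times itself vanishes, since 1 - x T is a unit. *)
lemma fps_eq_0_if_X_factor:
  fixes A T :: "'a::idom fps"
  assumes "A = fps_X * T * A"
  shows "A = 0"
proof -
  have "(1 - fps_X * T) * A = 0"
    by (simp add: left_diff_distrib flip: assms)
  moreover have "1 - fps_X * T \<noteq> 0"
  proof
    assume "1 - fps_X * T = 0"
    then have "(1 - fps_X * T) $ 0 = 0" by simp
    then show False by simp
  qed
  ultimately show ?thesis by simp
qed

lemma quadratic_fps_unique:
  fixes A A' B C K :: "'a::idom fps"
  assumes "A = C + fps_X * (B * A + fps_X * A * (K + A))"
    and "A' = C + fps_X * (B * A' + fps_X * A' * (K + A'))"
  shows "A = A'"
proof -
  have "A - A' = fps_X * (B + fps_X * (K + A + A')) * (A - A')"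
    using assms by algebra
  then have "A - A' = 0" by (rule fps_eq_0_if_X_factor)
  then show ?thesis by simp
qed

(* E (1 + (1 - q) x) and q M solve the same quadratic equation. *)
lemma Egf_eq_Mgf: "Egf q * (1 + fps_const (1 - q) * fps_X) = fps_const q * Mgf (q :: 'a::idom)"
proof -
  define c where "c = fps_const q"
  define N where "N = 1 + (1 - c) * fps_X"
  define V where "V = gf neg_motzkin (\<lambda>m. weight q (m @ [U]))"
  have V: "V = 1 + fps_X * Egf q + fps_X\<^sup>2 * (Egf q * V)"
    and E: "Egf q = c + c * fps_X * Egf q + fps_X\<^sup>2 * (Egf q * V)"
    unfolding V_def c_def by (rule Egf_equations)+
  have "Egf q * N = c * N + fps_X * (c * (Egf q * N) + fps_X * (Egf q * N) * ((1 - c) + Egf q * N))"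
    using V E unfolding N_def by algebra
  moreover have "c * Mgf q = c * N + fps_X * (c * (c * Mgf q) + fps_X * (c * Mgf q) * ((1 - c) + c * Mgf q))"
    using Mgf_equation[of q] unfolding N_def c_def[symmetric] by algebra
  ultimately have "Egf q * N = c * Mgf q"
    by (rule quadratic_fps_unique)
  then show ?thesis unfolding N_def c_def fps_const_one_minus .
qed

definition radicand :: "real \<Rightarrow> real fps" where
  "radicand q = (1 + fps_X) * (1 - fps_const (1 + 2*q) * fps_X - fps_const (1 - q^2) * fps_X^2
                  + fps_const ((1 - q)^2) * fps_X^3)"

definition motzkin_root :: "real \<Rightarrow> real fps" where
  "motzkin_root q = 1 - fps_X * (fps_const q + fps_X * (fps_const (1 - q) + 2 * fps_const q * Mgf q))"

lemma motzkin_root_nth_0: "motzkin_root q $ 0 = 1"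
  by (simp add: motzkin_root_def)

(* It squares to the radicand by the Motzkin equation, and has constant term 1. *)
lemma motzkin_root_eq_radical: "motzkin_root q = fps_radical (\<lambda>k c. root k c) 2 (radicand q)"
proof -
  define c where "c = fps_const q"
  have const_eqs: "fps_const (1 - q) = 1 - c" "fps_const (1 + 2*q) = 1 + 2*c"
    "fps_const (1 - q^2) = 1 - c^2" "fps_const ((1 - q)^2) = (1 - c)^2"
    unfolding c_def by (simp_all add: numeral_fps_const flip: fps_const_add)
      (metis fps_const_one_minus fps_const_power)+
  have "(motzkin_root q) ^ 2 = radicand q"
    using Mgf_equation[of q] unfolding motzkin_root_def radicand_def const_eqs c_def[symmetric] by algebra
  moreover have "radicand q $ 0 = 1"
    by (simp add: radicand_def fps_X_mult_nth power2_eq_square power3_eq_cube mult.assoc)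
  ultimately show ?thesis
    using radical_unique[of "\<lambda>k c. root k c" 1 "radicand q" "motzkin_root q"]
    by (simp add: motzkin_root_nth_0 numeral_2_eq_2)
qed

(* Elimination of FH and E from the equations for F. *)
lemma F_times_motzkin_root: "F q * motzkin_root q = 1 + fps_const (1 - q) * fps_X"
proof -
  define c where "c = fps_const q"
  define a where "a = fps_X + fps_X\<^sup>2 * Mgf q"
  define N where "N = 1 + (1 - c) * fps_X"
  define FH where "FH = gf grand (\<lambda>g. weight q (H # g))"
  define E where "E = Egf q"
  define s where "s = motzkin_root q"
  have F: "F q = 1 + a * FH + fps_X\<^sup>2 * E * F q"
    and FH: "FH = 1 + c * a * FH + fps_X\<^sup>2 * E * F q"
    unfolding a_def c_def FH_def E_def by (rule F_equations)+
  have M: "Mgf q = 1 + a * (1 + c * (Mgf q - 1))"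
    using Mgf_equation[of q] unfolding a_def c_def .
  have EN: "E * N = c * Mgf q"
    using Egf_eq_Mgf[of q] unfolding E_def N_def c_def fps_const_one_minus .
  have s: "s = 1 - c * fps_X - (1 - c) * fps_X\<^sup>2 - 2 * c * fps_X\<^sup>2 * Mgf q"
    unfolding s_def motzkin_root_def c_def fps_const_one_minus by (simp add: algebra_simps power2_eq_square)
  (* Eliminating FH gives F det = 1 + (1 - c) a; by the Motzkin equation and E N = c M,
     N det = s (1 + (1 - c) a). *)
  define det where "det = (1 - fps_X\<^sup>2 * E) * (1 - c * a) - a * fps_X\<^sup>2 * E"
  have "F q * det = 1 + (1 - c) * a"
    using F FH unfolding det_def by algebra
  moreover have "N * det = s * (1 + (1 - c) * a)"
    using M EN unfolding det_def s a_def N_def by algebra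
  ultimately have "(1 + (1 - c) * a) * (F q * s) = (1 + (1 - c) * a) * N"
    by algebra
  moreover have "1 + (1 - c) * a \<noteq> 0"
  proof
    assume "1 + (1 - c) * a = 0"
    then have "(1 + (1 - c) * a) $ 0 = 0" by simp
    then show False by (simp add: a_def power2_eq_square mult.assoc)
  qed
  ultimately have "F q * s = N" by simp
  then show ?thesis unfolding s_def N_def c_def fps_const_one_minus .
qed

theorem mainTheorem9:
  fixes q :: real
  shows "F q = (1 + fps_const (1 - q) * fps_X) *
    inverse (fps_radical (\<lambda>k c. root k c) 2
      ((1 + fps_X) * (1 - fps_const (1 + 2*q) * fps_X - fps_const (1 - q^2) * fps_X^2
                      + fps_const ((1 - q)^2) * fps_X^3)))"
proof -
  have "F q * motzkin_root q * inverse (motzkin_root q) = F q"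
    using motzkin_root_nth_0[of q] by (simp add: inverse_mult_eq_1' mult.assoc)
  then have "F q = (1 + fps_const (1 - q) * fps_X) * inverse (motzkin_root q)"
    by (simp add: F_times_motzkin_root)
  then show ?thesis
    unfolding motzkin_root_eq_radical radicand_def .
qed

end
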